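(* Let $\mathbb{F}\in\{\mathbb{R},\mathbb{C}\}$, $A\in\mathbb{F}^{m\times n}$ with $\|A\|_{\infty,col}\le1$, $x_0\in\mathbb{F}^n$ with $S=\mathrm{supp}\,x_0$ and $\#S=K$, $\epsilon\in\mathbb{F}^m$, $b=Ax_0+\epsilon$, and assume $\beta_K>0$. If $$|x_{0,j}|>\Big(1+\frac{1}{\beta_K}\Big)\|\epsilon\|_2\quad\text{for all }j\in S,$$ then the oracle solution $x'=x_S$ is a strict local minimizer of $\mathcal{K}_{K,reg}$ with $\mathrm{supp}(x')=\mathrm{supp}(x_0)$. Moreover $|x'_j|>\|\epsilon\|_2$ for $j\in S$, $\|Ax'-b\|_2\le\|\epsilon\|_2$ and $\|x'-x_0\|_2\le\|\epsilon\|_2/\beta_K$.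
   Context: $\|A\|_{\infty,col}=\max_i\|a_i\|_2$ over the columns $a_i$ of $A$. $\mathrm{card}(x)$ is the number of nonzero entries, $P_K=\{x:\mathrm{card}(x)\le K\}$, $\iota_{P_K}$ its indicator function; $\beta_k=\inf\{\|Ax\|_2/\|x\|_2:x\ne0,\ \mathrm{card}(x)\le k\}$. $\mathcal{Q}_2(\iota_{P_K})$ is the function such that $\mathcal{Q}_2(\iota_{P_K})(x)+\|x\|^2$ is the lower semicontinuous convex envelope of $\iota_{P_K}(x)+\|x\|^2$; explicitly, with $\tilde x$ the entries of $x$ sorted so that $|\tilde x_j|$ is non-increasing, $\mathcal{Q}_2(\iota_{P_K})(x)=\frac{1}{k_*}\big(\sum_{j>K-k_*}|\tilde x_j|\big)^2-\sum_{j>K-k_*}|\tilde x_j|^2$, where $k_*$ is the largest $k\in\{1,\dots,K\}$ with $\sum_{j>K-k}|\tilde x_j|-k|\tilde x_{K+1-k}|\ge0$. $\mathcal{K}_{K,reg}(x)=\mathcal{Q}_2(\iota_{P_K})(x)+\|Ax-b\|_2^2$. $A_S$ is $A$ with columns outside $S$ set to zero; the oracle solution is $x_S=(A_S^*A_S)^\dagger A_S^*b$ ($\dagger$ Moore–Penrose inverse, $A^*$ conjugate transpose). *)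

theory Defs
  imports "HOL-Analysis.Analysis" "HOL-Library.Multiset"
begin

text \<open>Vectors in F^n are 'a^'n, matrices in F^(m x n) are 'a^'n^'m, with
  'a = real or complex; the field conjugation is passed as parameter cj
  (id for real, cnj for complex). The norm of 'a^'n is the Euclidean 2-norm.\<close>

definition supp :: "'a::zero^'n \<Rightarrow> 'n set" where
  "supp x = {i. x $ i \<noteq> 0}"

definition card_nz :: "'a::zero^'n \<Rightarrow> nat" where
  "card_nz x = card (supp x)"

definition col_inf_norm_le1 :: "'a::real_normed_vector^'n^'m \<Rightarrow> bool" where
  "col_inf_norm_le1 A \<longleftrightarrow> (\<forall>j. norm (column j A) \<le> 1)"

definition beta :: "'a::real_normed_field^'n^'m \<Rightarrow> nat \<Rightarrow> real" where
  "beta A k = Inf {norm (A *v x) / norm x | x. x \<noteq> 0 \<and> card_nz x \<le> k}"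

text \<open>Absolute values of the entries, sorted non-increasingly; 1-indexed access.\<close>
definition sorted_abs :: "'a::real_normed_vector^'n \<Rightarrow> real list" where
  "sorted_abs x = rev (sorted_list_of_multiset (image_mset (\<lambda>i. norm (x $ i)) (mset_set UNIV)))"

definition xt :: "'a::real_normed_vector^'n \<Rightarrow> nat \<Rightarrow> real" where
  "xt x j = sorted_abs x ! (j - 1)"

definition tailsum :: "'a::real_normed_vector^'n \<Rightarrow> nat \<Rightarrow> nat \<Rightarrow> real" where
  "tailsum x K k = (\<Sum>j\<in>{K - k + 1..CARD('n)}. xt x j)"

definition kstar :: "'a::real_normed_vector^'n \<Rightarrow> nat \<Rightarrow> nat" where
  "kstar x K = (GREATEST k. k \<in> {1..K} \<and> tailsum x K k - real k * xt x (K + 1 - k) \<ge> 0)"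

definition Q2 :: "nat \<Rightarrow> 'a::real_normed_vector^'n \<Rightarrow> real" where
  "Q2 K x = (let k = kstar x K in
     (1 / real k) * (tailsum x K k)\<^sup>2 - (\<Sum>j\<in>{K - k + 1..CARD('n)}. (xt x j)\<^sup>2))"

definition KKreg :: "nat \<Rightarrow> 'a::real_normed_field^'n^'m \<Rightarrow> 'a^'m \<Rightarrow> 'a^'n \<Rightarrow> real" where
  "KKreg K A b x = Q2 K x + (norm (A *v x - b))\<^sup>2"

definition strict_local_min :: "('b::metric_space \<Rightarrow> real) \<Rightarrow> 'b \<Rightarrow> bool" where
  "strict_local_min f x \<longleftrightarrow> (\<exists>\<delta>>0. \<forall>y. y \<noteq> x \<and> dist y x < \<delta> \<longrightarrow> f x < f y)"

definition conjT :: "('a \<Rightarrow> 'a) \<Rightarrow> 'a^'n^'m \<Rightarrow> 'a^'m^'n" where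
  "conjT cj M = (\<chi> i j. cj (M $ j $ i))"

definition pinv :: "('a::comm_ring_1 \<Rightarrow> 'a) \<Rightarrow> 'a^'n^'m \<Rightarrow> 'a^'m^'n" where
  "pinv cj M = (THE X. M ** X ** M = M \<and> X ** M ** X = X \<and>
                 conjT cj (M ** X) = M ** X \<and> conjT cj (X ** M) = X ** M)"

definition restrict_cols :: "'a::zero^'n^'m \<Rightarrow> 'n set \<Rightarrow> 'a^'n^'m" where
  "restrict_cols A S = (\<chi> i j. if j \<in> S then A $ i $ j else 0)"

definition oracle_sol :: "('a::comm_ring_1 \<Rightarrow> 'a) \<Rightarrow> 'a^'n^'m \<Rightarrow> 'n set \<Rightarrow> 'a^'m \<Rightarrow> 'a^'n" where
  "oracle_sol cj A S b = (let AS = restrict_cols A S in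
     pinv cj (conjT cj AS ** AS) *v (conjT cj AS *v b))"

end

theory Submission
  imports Defs
begin

text \<open>The oracle solution \<open>x'\<close> solves the least-squares problem on the support \<open>S\<close>, so
  its residual \<open>r = A x' - b\<close> is orthogonal to the range of \<open>A\<^sub>S\<close>.  Pythagoras splits
  \<open>\<parallel>\<epsilon>\<parallel>\<^sup>2 = \<parallel>A (x' - x\<^sub>0)\<parallel>\<^sup>2 + \<parallel>r\<parallel>\<^sup>2\<close>, which gives \<open>\<parallel>r\<parallel> \<le> \<parallel>\<epsilon>\<parallel>\<close> and, through
  \<open>\<beta>\<^sub>K\<close>, \<open>\<parallel>x' - x\<^sub>0\<parallel> \<le> \<parallel>\<epsilon>\<parallel> / \<beta>\<^sub>K\<close>; with the size assumption on \<open>x\<^sub>0\<close> this yields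
  \<open>|x'\<^sub>j| > \<parallel>\<epsilon>\<parallel> \<ge> \<parallel>r\<parallel>\<close> on \<open>S\<close>.  The penalty \<open>Q\<^sub>2(\<iota>\<^sub>P\<^sub>K)\<close> vanishes at
  \<open>K\<close>-sparse vectors and, near \<open>x'\<close>, grows at rate about \<open>2 min\<^sub>S |x'\<^sub>j|\<close> in the mass
  moved off \<open>S\<close>, whereas the data term can decrease at rate at most about \<open>2 \<parallel>r\<parallel>\<close>;
  perturbations inside \<open>S\<close> increase the data term because \<open>A\<^sub>S\<close> is injective.\<close>

lemma matrix_add_rdistrib: "(B + C) ** A = B ** A + C ** A"
  for A :: "'a::semiring_1^'p^'n"
  by (simp add: matrix_matrix_mult_def vec_eq_iff sum.distrib[symmetric] distrib_right)

lemma matrix_diff_ldistrib: "A ** (B - C) = A ** B - A ** C"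
  for A :: "'a::ring_1^'n^'m"
  by (simp add: matrix_matrix_mult_def vec_eq_iff sum_subtractf[symmetric] right_diff_distrib)

lemma matrix_diff_rdistrib: "(B - C) ** A = B ** A - C ** A"
  for A :: "'a::ring_1^'p^'n"
  by (simp add: matrix_matrix_mult_def vec_eq_iff sum_subtractf[symmetric] left_diff_distrib)

lemma norm_sq_vec: "(norm v)^2 = (\<Sum>i\<in>UNIV. (norm (v $ i))^2)"
  for v :: "'a::real_normed_vector^'n"
  by (simp add: norm_vec_def L2_set_def sum_nonneg)

lemma norm_vector_scalar_mult: "norm (c *s x) = norm c * norm x"
  for x :: "'a::real_normed_field^'n"
  unfolding norm_vec_def by (simp add: L2_set_right_distrib norm_mult)

lemma norm_matrix_vector_le_sum:
  fixes A :: "'a::real_normed_field^'n^'m"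
  assumes "col_inf_norm_le1 A"
  shows "norm (A *v w) \<le> (\<Sum>j\<in>UNIV. norm (w $ j))"
proof -
  have "norm (A *v w) \<le> (\<Sum>j\<in>UNIV. norm ((w $ j) *s column j A))"
    unfolding matrix_mult_sum by (rule norm_sum)
  also have "\<dots> \<le> (\<Sum>j\<in>UNIV. norm (w $ j))"
    using assms by (intro sum_mono)
      (auto simp: norm_vector_scalar_mult col_inf_norm_le1_def intro: mult_left_le)
  finally show ?thesis .
qed

lemma norm_add_sq_ge: "(norm w)^2 - 2 * norm w * norm v \<le> (norm (w + v))^2"
  for v w :: "'a::real_normed_vector"
proof (cases "norm v \<le> norm w")
  case True
  then have "(norm w - norm v)^2 \<le> (norm (w + v))^2"
    using norm_diff_ineq[of w v] by (intro power_mono) auto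
  moreover have "(norm w)^2 - 2 * norm w * norm v \<le> (norm w - norm v)^2"
    by (simp add: power2_diff)
  ultimately show ?thesis
    by linarith
next
  case False
  then have "norm w - 2 * norm v \<le> 0"
    using norm_ge_zero[of v] by linarith
  then have "norm w * (norm w - 2 * norm v) \<le> 0"
    by (simp add: mult_nonneg_nonpos)
  moreover have "(norm w)^2 - 2 * norm w * norm v = norm w * (norm w - 2 * norm v)"
    by (simp add: power2_eq_square algebra_simps)
  ultimately show ?thesis
    using zero_le_power2[of "norm (w + v)"] by linarith
qed

lemma supp_diff_subset: "supp (x - y) \<subseteq> supp x \<union> supp y"
  for x y :: "'a::group_add^'n"
  by (auto simp: supp_def)

section \<open>Coordinate projections and sparse injectivity\<close>

definition coord_proj :: "'n set \<Rightarrow> 'a::semiring_1^'n^'n" where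
  "coord_proj S = (\<chi> i j. if i = j \<and> i \<in> S then 1 else 0)"

lemma coord_proj_mult_vec: "coord_proj S *v v = (\<chi> i. if i \<in> S then v $ i else 0)"
  unfolding coord_proj_def matrix_vector_mult_def vec_eq_iff
  by (auto simp: if_distrib[of "\<lambda>x. x * _"] cong: if_cong)

lemma coord_proj_mult_vec_eq_iff: "coord_proj S *v v = v \<longleftrightarrow> supp v \<subseteq> S"
  by (auto simp: coord_proj_mult_vec supp_def vec_eq_iff)

lemma coord_proj_mult_left: "coord_proj S ** M = (\<chi> i j. if i \<in> S then M $ i $ j else 0)"
  unfolding coord_proj_def matrix_matrix_mult_def vec_eq_iff
  by (auto simp: if_distrib[of "\<lambda>x. x * _"] sum.delta cong: if_cong)

lemma coord_proj_mult_right: "M ** coord_proj S = (\<chi> i j. if j \<in> S then M $ i $ j else 0)"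
  unfolding coord_proj_def matrix_matrix_mult_def vec_eq_iff
  by (auto simp: if_distrib[of "\<lambda>x. _ * x"] sum.If_cases Int_def Collect_conv_if cong: if_cong)

lemma coord_proj_mult: "coord_proj S ** coord_proj T = coord_proj (S \<inter> T)"
  unfolding coord_proj_mult_left by (auto simp: coord_proj_def vec_eq_iff)

lemma coord_proj_empty [simp]: "coord_proj {} = 0"
  by (simp add: coord_proj_def vec_eq_iff)

lemma coord_proj_add_compl: "coord_proj S + coord_proj (- S) = mat 1"
  by (auto simp: coord_proj_def mat_def vec_eq_iff)

lemma restrict_cols_eq: "restrict_cols A S = A ** coord_proj S"
  by (simp add: restrict_cols_def coord_proj_mult_right)

definition indep_cols :: "'a::semiring_1^'n^'m \<Rightarrow> 'n set \<Rightarrow> bool" where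
  "indep_cols A S \<longleftrightarrow> (\<forall>v. supp v \<subseteq> S \<longrightarrow> A *v v = 0 \<longrightarrow> v = 0)"

lemma beta_mult_norm_le:
  fixes A :: "'a::real_normed_field^'n^'m"
  assumes "card_nz v \<le> k"
  shows "beta A k * norm v \<le> norm (A *v v)"
proof (cases "v = 0")
  case False
  have "bdd_below {norm (A *v x) / norm x | x. x \<noteq> 0 \<and> card_nz x \<le> k}"
    by (rule bdd_belowI[of _ 0]) auto
  then have "beta A k \<le> norm (A *v v) / norm v"
    unfolding beta_def using False assms by (intro cInf_lower) auto
  then show ?thesis
    using False by (simp add: field_simps)
qed simp

lemma indep_cols_if_beta_pos:
  fixes A :: "'a::real_normed_field^'n^'m"
  assumes "beta A (card S) > 0"
  shows "indep_cols A S"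
  unfolding indep_cols_def
proof (intro allI impI)
  fix v :: "'a^'n"
  assume "supp v \<subseteq> S" and "A *v v = 0"
  then have "beta A (card S) * norm v \<le> 0"
    using beta_mult_norm_le[of v "card S" A] by (simp add: card_nz_def card_mono)
  with assms show "v = 0"
    by (simp add: mult_le_0_iff)
qed

section \<open>Lower bounds for the quadratic envelope\<close>

lemma sum_power2_le_power2_sum:
  fixes f :: "'b \<Rightarrow> real"
  assumes "\<And>i. i \<in> A \<Longrightarrow> 0 \<le> f i"
  shows "(\<Sum>i\<in>A. (f i)^2) \<le> (sum f A)^2"
proof -
  have "L2_set f A \<le> sum f A"
    using assms by (rule L2_set_le_sum)
  then have "(L2_set f A)^2 \<le> (sum f A)^2"
    by (simp add: power_mono L2_set_nonneg)
  then show ?thesis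
    by (simp add: L2_set_def sum_nonneg)
qed

lemma mean_square_excess_eq:
  fixes a :: "'b \<Rightarrow> real"
  assumes "finite B" "B \<noteq> {}"
  shows "(1 / card B) * (sum a B + T)^2 - (\<Sum>j\<in>B. (a j)^2)
    = 2 * M * T + (T - (\<Sum>j\<in>B. M - a j))^2 / card B - (\<Sum>j\<in>B. (M - a j)^2)"
proof -
  have k: "real (card B) > 0"
    using assms by (simp add: card_gt_0_iff)
  have excess: "(\<Sum>j\<in>B. M - a j) = card B * M - sum a B"
    by (simp add: sum_subtractf)
  have excess_sq: "(\<Sum>j\<in>B. (M - a j)^2) = card B * M^2 - 2 * M * sum a B + (\<Sum>j\<in>B. (a j)^2)"
    by (simp add: power2_diff sum.distrib sum_subtractf sum_distrib_left)
  show ?thesis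
    unfolding excess excess_sq using k by (simp add: field_simps power2_eq_square)
qed

text \<open>With the deficit \<open>D = (\<Sum>j\<in>B. M - a j)\<close>, \<open>Q\<close> equals
  \<open>2 M T + (T - D)\<^sup>2 / |B| - (\<Sum>j\<in>B. (M - a j)\<^sup>2) - (\<Sum>j\<in>C. (a j)\<^sup>2)\<close>, and the mean
  condition says exactly \<open>D \<le> T\<close>.\<close>

lemma block_Q2_bounds:
  fixes a :: "'b \<Rightarrow> real"
  assumes B: "finite B" "B \<noteq> {}" and C: "finite C" "B \<inter> C = {}"
    and block: "\<And>j. j \<in> B \<Longrightarrow> a j \<le> M"
    and mean: "real (card B) * M \<le> sum a (B \<union> C)"
    and tail: "\<And>j. j \<in> C \<Longrightarrow> 0 \<le> a j \<and> a j \<le> \<tau>"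
  defines "T \<equiv> sum a C"
    and "Q \<equiv> (1 / card B) * (sum a (B \<union> C))^2 - (\<Sum>j\<in>B \<union> C. (a j)^2)"
  shows "T * (2 * M - T - \<tau>) \<le> Q" and "T = 0 \<Longrightarrow> Q \<le> 0"
proof -
  define D where "D = (\<Sum>j\<in>B. M - a j)"
  define E where "E = (\<Sum>j\<in>B. (M - a j)^2)"
  define F where "F = (\<Sum>j\<in>C. (a j)^2)"
  have "Q = (1 / card B) * (sum a B + T)^2 - (\<Sum>j\<in>B. (a j)^2) - F"
    using B C by (simp add: Q_def T_def F_def sum.union_disjoint)
  then have Q: "Q = 2 * M * T + (T - D)^2 / card B - E - F"
    using mean_square_excess_eq[OF B, of a T M] by (simp add: D_def E_def)
  have T: "0 \<le> T"
    unfolding T_def using tail by (simp add: sum_nonneg)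
  have D: "0 \<le> D" "D \<le> T"
  proof -
    show "0 \<le> D"
      unfolding D_def using block by (simp add: sum_nonneg)
    show "D \<le> T"
      using mean B C by (simp add: D_def T_def sum_subtractf sum.union_disjoint)
  qed
  have E: "0 \<le> E" "E \<le> D^2"
    using block by (simp_all add: E_def D_def sum_nonneg sum_power2_le_power2_sum)
  have F: "0 \<le> F" "F \<le> \<tau> * T"
  proof -
    have "F \<le> (\<Sum>j\<in>C. \<tau> * a j)"
      unfolding F_def using tail by (intro sum_mono) (simp add: power2_eq_square mult_right_mono)
    then show "F \<le> \<tau> * T"
      by (simp add: sum_distrib_left T_def)
  qed (simp add: F_def sum_nonneg)
  have "D^2 \<le> T^2"
    using D by (simp add: power_mono)
  moreover have "T * (2 * M - T - \<tau>) = 2 * M * T - T^2 - \<tau> * T"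
    by (simp add: algebra_simps power2_eq_square)
  moreover have "0 \<le> (T - D)^2 / card B"
    by simp
  ultimately show "T * (2 * M - T - \<tau>) \<le> Q"
    using E F unfolding Q by linarith
  assume "T = 0"
  with D E F show "Q \<le> 0"
    unfolding Q by simp
qed

lemma antimono_seq_Q2_bounds:
  fixes a :: "nat \<Rightarrow> real"
  assumes k: "1 \<le> k" "k \<le> K" "K \<le> N"
    and antimono: "\<And>i j. 1 \<le> i \<Longrightarrow> i \<le> j \<Longrightarrow> j \<le> N \<Longrightarrow> a j \<le> a i"
    and nonneg: "\<And>j. 1 \<le> j \<Longrightarrow> j \<le> N \<Longrightarrow> 0 \<le> a j"
    and kcond: "real k * a (K + 1 - k) \<le> (\<Sum>j\<in>{K-k+1..N}. a j)"
    and tail: "\<And>j. K + 1 \<le> j \<Longrightarrow> j \<le> N \<Longrightarrow> a j \<le> \<tau>"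
  defines "T \<equiv> \<Sum>j\<in>{K+1..N}. a j"
    and "Q \<equiv> (1 / real k) * (\<Sum>j\<in>{K-k+1..N}. a j)^2 - (\<Sum>j\<in>{K-k+1..N}. (a j)^2)"
  shows "T * (2 * a K - T - \<tau>) \<le> Q" and "T = 0 \<Longrightarrow> Q \<le> 0"
proof -
  have split: "{K-k+1..N} = {K-k+1..K} \<union> {K+1..N}"
    using k by auto
  have "card {K-k+1..K} = k"
    using k by simp
  note bounds = block_Q2_bounds[of "{K-k+1..K}" "{K+1..N}" a "a (K + 1 - k)" \<tau>,
      folded split T_def, unfolded this, folded Q_def]
  have "T * (2 * a K - T - \<tau>) \<le> T * (2 * a (K + 1 - k) - T - \<tau>)"
    using k antimono[of "K + 1 - k" K] nonneg
    by (intro mult_left_mono) (auto simp: T_def intro: sum_nonneg)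
  also have "\<dots> \<le> Q"
    using k antimono nonneg kcond tail by (intro bounds(1)) auto
  finally show "T * (2 * a K - T - \<tau>) \<le> Q" .
  show "T = 0 \<Longrightarrow> Q \<le> 0"
    using k antimono nonneg kcond tail by (intro bounds(2)) auto
qed

lemma length_sorted_abs: "length (sorted_abs y) = CARD('n)"
  for y :: "'a::real_normed_vector^'n"
  by (simp add: sorted_abs_def size_mset[symmetric] del: size_mset)

lemma xt_antimono:
  fixes y :: "'a::real_normed_vector^'n"
  assumes "1 \<le> i" "i \<le> j" "j \<le> CARD('n)"
  shows "xt y j \<le> xt y i"
proof -
  define L where "L = sorted_list_of_multiset (image_mset (\<lambda>i. norm (y $ i)) (mset_set (UNIV::'n set)))"
  have len: "length L = CARD('n)"
    using length_sorted_abs[of y] by (simp add: sorted_abs_def L_def)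
  have "L ! (length L - j) \<le> L ! (length L - i)"
    using assms len by (intro sorted_nth_mono) (auto simp: L_def)
  then show ?thesis
    using assms len by (simp add: xt_def sorted_abs_def L_def[symmetric] rev_nth Suc_diff_le)
qed

lemma xt_nonneg:
  fixes y :: "'a::real_normed_vector^'n"
  assumes "1 \<le> j" "j \<le> CARD('n)"
  shows "0 \<le> xt y j"
proof -
  have "xt y j \<in> set (sorted_abs y)"
    using assms length_sorted_abs[of y] by (simp add: xt_def)
  then show ?thesis
    by (auto simp: sorted_abs_def)
qed

lemma sum_list_drop_eq_sum_nth:
  assumes "K \<le> length L"
  shows "sum_list (drop K L) = (\<Sum>j\<in>{K+1..length L}. L ! (j - 1))"
proof -
  have "(\<Sum>j\<in>{K+1..length L}. L ! (j - 1)) = (\<Sum>i\<in>{K..<length L}. L ! i)"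
    by (rule sum.reindex_bij_witness[where i="\<lambda>i. i + 1" and j="\<lambda>j. j - 1"]) auto
  also have "\<dots> = (\<Sum>i\<in>{0..<length L - K}. L ! (i + K))"
    using sum.shift_bounds_nat_ivl[where g="\<lambda>i. L ! i" and m=0 and k=K and n="length L - K"] assms
    by simp
  also have "\<dots> = sum_list (drop K L)"
    using assms by (simp add: sum_list_sum_nth add.commute)
  finally show ?thesis
    by simp
qed

lemma sorted_abs_dominant_append:
  fixes y :: "'a::real_normed_vector^'n" and S :: "'n set"
  assumes sep: "\<And>i j. i \<in> S \<Longrightarrow> j \<notin> S \<Longrightarrow> norm (y $ j) \<le> norm (y $ i)"
  defines "sorted_norms T \<equiv> sorted_list_of_multiset (image_mset (\<lambda>i. norm (y $ i)) (mset_set T))"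
  shows "sorted_abs y = rev (sorted_norms S) @ rev (sorted_norms (- S))"
proof -
  have "mset_set (UNIV::'n set) = mset_set (- S) + mset_set S"
    by (subst mset_set_Union[symmetric]) auto
  then have "image_mset (\<lambda>i. norm (y $ i)) (mset_set UNIV) = mset (sorted_norms (- S) @ sorted_norms S)"
    by (simp add: sorted_norms_def)
  moreover have "sorted (sorted_norms (- S) @ sorted_norms S)"
    unfolding sorted_append using sep by (auto simp: sorted_norms_def)
  ultimately show ?thesis
    unfolding sorted_abs_def by (metis rev_append sorted_list_of_multiset_mset sorted_sort_id)
qed

lemma xt_dominant_split:
  fixes y :: "'a::real_normed_vector^'n" and S :: "'n set"
  assumes sep: "\<And>i j. i \<in> S \<Longrightarrow> j \<notin> S \<Longrightarrow> norm (y $ j) \<le> norm (y $ i)"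
  shows "\<And>j. 1 \<le> j \<Longrightarrow> j \<le> card S \<Longrightarrow> xt y j \<in> (\<lambda>i. norm (y $ i)) ` S"
    and "\<And>j. card S < j \<Longrightarrow> j \<le> CARD('n) \<Longrightarrow> xt y j \<in> (\<lambda>i. norm (y $ i)) ` (- S)"
    and "(\<Sum>j\<in>{card S+1..CARD('n)}. xt y j) = (\<Sum>i\<in>- S. norm (y $ i))"
proof -
  define l1 where "l1 = sorted_list_of_multiset (image_mset (\<lambda>i. norm (y $ i)) (mset_set (- S)))"
  define l2 where "l2 = sorted_list_of_multiset (image_mset (\<lambda>i. norm (y $ i)) (mset_set S))"
  have sorted_abs_eq: "sorted_abs y = rev l2 @ rev l1"
    unfolding l1_def l2_def using sep by (rule sorted_abs_dominant_append)
  have len2: "length l2 = card S"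
    by (simp add: l2_def size_mset[symmetric] del: size_mset)
  have len: "length (rev l2 @ rev l1) = CARD('n)"
    using length_sorted_abs[of y] sorted_abs_eq by simp
  show "xt y j \<in> (\<lambda>i. norm (y $ i)) ` S" if "1 \<le> j" "j \<le> card S" for j
  proof -
    have "j - 1 < length l2"
      using that len2 by simp
    then have "xt y j \<in> set l2"
      by (simp add: xt_def sorted_abs_eq nth_append) (metis length_rev nth_mem set_rev)
    then show ?thesis
      by (simp add: l2_def)
  qed
  show "xt y j \<in> (\<lambda>i. norm (y $ i)) ` (- S)" if "card S < j" "j \<le> CARD('n)" for j
  proof -
    have "\<not> j - 1 < length l2"
      using that len2 by simp
    then have "xt y j = rev l1 ! (j - 1 - card S)"
      using len2 by (simp add: xt_def sorted_abs_eq nth_append)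
    also have "\<dots> \<in> set l1"
      using that len len2 by (intro nth_mem[where xs="rev l1", simplified]) simp
    finally show ?thesis
      by (simp add: l1_def)
  qed
  have "(\<Sum>j\<in>{card S+1..CARD('n)}. xt y j) = sum_list (drop (card S) (sorted_abs y))"
    using sum_list_drop_eq_sum_nth[of "card S" "sorted_abs y"] len len2 sorted_abs_eq
    by (simp add: xt_def length_sorted_abs)
  also have "\<dots> = (\<Sum>i\<in>- S. norm (y $ i))"
    using len2 by (simp add: sorted_abs_eq l1_def sum_mset_sum_list[symmetric] sum_unfold_sum_mset)
  finally show "(\<Sum>j\<in>{card S+1..CARD('n)}. xt y j) = (\<Sum>i\<in>- S. norm (y $ i))" .
qed

lemma kstar_props:
  fixes x :: "'a::real_normed_vector^'n"
  assumes "1 \<le> K" "K \<le> CARD('n)"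
  shows "1 \<le> kstar x K" "kstar x K \<le> K"
    and "real (kstar x K) * xt x (K + 1 - kstar x K) \<le> tailsum x K (kstar x K)"
proof -
  define P where "P k \<longleftrightarrow> k \<in> {1..K} \<and> tailsum x K k - real k * xt x (K + 1 - k) \<ge> 0" for k
  have "tailsum x K 1 = xt x K + (\<Sum>j\<in>{K+1..CARD('n)}. xt x j)"
    using assms by (simp add: tailsum_def sum.atLeast_Suc_atMost)
  moreover have "0 \<le> (\<Sum>j\<in>{K+1..CARD('n)}. xt x j)"
    by (rule sum_nonneg) (simp add: xt_nonneg)
  ultimately have "P 1"
    using assms by (simp add: P_def)
  then have "P (kstar x K)"
    unfolding kstar_def P_def[symmetric] by (rule GreatestI_nat[where b=K]) (simp add: P_def)
  then show "1 \<le> kstar x K" "kstar x K \<le> K"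
      "real (kstar x K) * xt x (K + 1 - kstar x K) \<le> tailsum x K (kstar x K)"
    by (simp_all add: P_def)
qed

lemma Q2_bounds:
  fixes y :: "'a::real_normed_vector^'n"
  assumes "S \<noteq> {}" and "\<tau> \<le> \<mu>"
    and head: "\<And>i. i \<in> S \<Longrightarrow> \<mu> \<le> norm (y $ i)"
    and tail: "\<And>j. j \<notin> S \<Longrightarrow> norm (y $ j) \<le> \<tau>"
  defines "T \<equiv> \<Sum>j\<in>- S. norm (y $ j)"
  shows "T * (2 * \<mu> - T - \<tau>) \<le> Q2 (card S) y" and "T = 0 \<Longrightarrow> Q2 (card S) y \<le> 0"
proof -
  define K where "K = card S"
  define N where "N = CARD('n)"
  define k where "k = kstar y K"
  have sep: "norm (y $ j) \<le> norm (y $ i)" if "i \<in> S" "j \<notin> S" for i j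
    using head[OF that(1)] tail[OF that(2)] assms(2) by linarith
  note split = xt_dominant_split[where y=y and S=S, OF sep, folded K_def N_def]
  have K: "1 \<le> K" "K \<le> N"
    using assms(1) by (simp_all add: K_def N_def Suc_le_eq card_gt_0_iff card_mono)
  note kstar = kstar_props[OF K[unfolded N_def], of y, folded k_def]
  obtain i where "i \<in> S" "xt y K = norm (y $ i)"
    using split(1)[where j=K] K by auto
  then have "\<mu> \<le> xt y K"
    using head by simp
  then have head_bound: "T * (2 * \<mu> - T - \<tau>) \<le> T * (2 * xt y K - T - \<tau>)"
    by (intro mult_left_mono) (auto simp: T_def sum_nonneg)
  have tail_bound: "xt y j \<le> \<tau>" if j: "K + 1 \<le> j" "j \<le> N" for j
  proof -
    obtain i where "i \<notin> S" "xt y j = norm (y $ i)"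
      using split(2)[where j=j] j by (auto simp: N_def)
    then show ?thesis
      using tail by simp
  qed
  have kcond: "real k * xt y (K + 1 - k) \<le> (\<Sum>j\<in>{K-k+1..N}. xt y j)"
    using kstar(3) by (simp add: tailsum_def N_def)
  have "(\<Sum>j\<in>{K+1..N}. xt y j) = T"
    using split(3) by (simp add: T_def N_def)
  moreover have "Q2 K y = (1 / real k) * (\<Sum>j\<in>{K-k+1..N}. xt y j)^2 - (\<Sum>j\<in>{K-k+1..N}. (xt y j)^2)"
    by (simp add: Q2_def Let_def k_def tailsum_def N_def)
  moreover note antimono_seq_Q2_bounds[OF kstar(1,2) K(2) _ _ kcond tail_bound]
  ultimately show "T * (2 * \<mu> - T - \<tau>) \<le> Q2 (card S) y" "T = 0 \<Longrightarrow> Q2 (card S) y \<le> 0"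
    using head_bound by (simp_all add: K_def[symmetric] N_def xt_antimono xt_nonneg)
qed

lemma Q2_nonpos_if_supp_subset:
  fixes y :: "'a::real_normed_vector^'n"
  assumes "supp y \<subseteq> S" and "S \<noteq> {}"
  shows "Q2 (card S) y \<le> 0"
proof -
  have off: "y $ j = 0" if "j \<notin> S" for j
    using assms(1) that by (auto simp: supp_def)
  show ?thesis
    by (rule Q2_bounds(2)[where \<mu>=0 and \<tau>=0]) (use assms(2) off in auto)
qed

lemma Q2_lower_bound_near_sparse:
  fixes x h :: "'a::real_normed_vector^'n"
  assumes "S \<noteq> {}" and supp: "supp x \<subseteq> S" and head: "\<And>j. j \<in> S \<Longrightarrow> m \<le> norm (x $ j)"
    and small: "\<And>j. norm (h $ j) \<le> \<delta>" and "2 * \<delta> \<le> m"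
  defines "T \<equiv> \<Sum>j\<in>- S. norm (h $ j)"
  shows "T * (2 * (m - \<delta>) - T - \<delta>) \<le> Q2 (card S) (x + h)"
proof -
  have "m - \<delta> \<le> norm ((x + h) $ i)" if "i \<in> S" for i
    using head[OF that] small[of i] norm_triangle_ineq4[of "(x + h) $ i" "h $ i"] by simp
  moreover have "(x + h) $ j = h $ j" if "j \<notin> S" for j
    using supp that by (auto simp: supp_def)
  ultimately show ?thesis
    using Q2_bounds(1)[OF \<open>S \<noteq> {}\<close>, of \<delta> "m - \<delta>" "x + h"] small \<open>2 * \<delta> \<le> m\<close>
    by (simp add: T_def)
qed

section \<open>Hermitian structure and the oracle solution\<close>

locale conjugation =
  fixes cj :: "'a::real_normed_field \<Rightarrow> 'a"
  assumes cj_add: "cj (x + y) = cj x + cj y"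
    and cj_mult: "cj (x * y) = cj x * cj y"
    and cj_cj [simp]: "cj (cj x) = x"
    and cj_mult_self: "cj x * x = of_real ((norm x)^2)"
begin

lemma cj_0 [simp]: "cj 0 = 0"
  using cj_add[of 0 0] by simp

lemma cj_1 [simp]: "cj 1 = 1"
  using cj_mult_self[of 1] by simp

lemma cj_sum: "cj (sum f A) = (\<Sum>a\<in>A. cj (f a))"
  by (induction A rule: infinite_finite_induct) (auto simp: cj_add)

definition hinner :: "'a^'k \<Rightarrow> 'a^'k \<Rightarrow> 'a" where
  "hinner u v = (\<Sum>i\<in>UNIV. cj (u $ i) * v $ i)"

lemma hinner_zero_right [simp]: "hinner u 0 = 0"
  by (simp add: hinner_def)

lemma hinner_self: "hinner v v = of_real ((norm v)^2)"
  by (simp add: hinner_def cj_mult_self norm_sq_vec)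

lemma hinner_commute: "hinner w u = cj (hinner u w)"
  by (simp add: hinner_def cj_sum cj_mult mult.commute)

lemma hinner_add_left: "hinner (u + v) w = hinner u w + hinner v w"
  by (simp add: hinner_def cj_add distrib_right sum.distrib)

lemma hinner_add_right: "hinner w (u + v) = hinner w u + hinner w v"
  by (simp add: hinner_def distrib_left sum.distrib)

lemma hinner_uminus_right: "hinner u (- w) = - hinner u w"
  by (simp add: hinner_def sum_negf)

lemma norm_add_sq_orthogonal:
  assumes "hinner u w = 0"
  shows "(norm (u + w))^2 = (norm u)^2 + (norm w)^2"
proof -
  have "hinner w u = 0"
    using assms hinner_commute[of w u] by simp
  then have "hinner (u + w) (u + w) = hinner u u + hinner w w"
    using assms by (simp add: hinner_add_left hinner_add_right)
  then have "(of_real ((norm (u + w))^2) :: 'a) = of_real ((norm u)^2 + (norm w)^2)"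
    by (simp only: hinner_self of_real_add)
  then show ?thesis
    using of_real_eq_iff by blast
qed

lemma hinner_conjT_right: "hinner u (conjT cj B *v w) = hinner (B *v u) w"
proof -
  have "hinner u (conjT cj B *v w) = (\<Sum>i\<in>UNIV. \<Sum>k\<in>UNIV. cj (u $ i) * (cj (B $ k $ i) * w $ k))"
    by (simp add: hinner_def conjT_def matrix_vector_mult_def sum_distrib_left)
  also have "\<dots> = (\<Sum>k\<in>UNIV. \<Sum>i\<in>UNIV. cj (u $ i) * (cj (B $ k $ i) * w $ k))"
    by (rule sum.swap)
  also have "\<dots> = hinner (B *v u) w"
    by (simp add: hinner_def matrix_vector_mult_def cj_sum cj_mult sum_distrib_right
        sum_distrib_left mult_ac)
  finally show ?thesis .
qed

lemma conjT_matrix_mult: "conjT cj (A ** B) = conjT cj B ** conjT cj A"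
  by (simp add: conjT_def matrix_matrix_mult_def vec_eq_iff cj_sum cj_mult mult.commute)

lemma conjT_coord_proj [simp]: "conjT cj (coord_proj S) = coord_proj S"
  by (simp add: conjT_def coord_proj_def vec_eq_iff)

definition penrose :: "'a^'n^'n \<Rightarrow> 'a^'n^'n \<Rightarrow> bool" where
  "penrose M X \<longleftrightarrow> M ** X ** M = M \<and> X ** M ** X = X \<and>
     conjT cj (M ** X) = M ** X \<and> conjT cj (X ** M) = X ** M"

lemma penrose_unique:
  assumes X: "penrose M X" and Y: "penrose M Y"
  shows "X = Y"
proof -
  note H = conjT_matrix_mult
  have x1: "M ** X ** M = M" "X ** M ** X = X" "conjT cj (M ** X) = M ** X" "conjT cj (X ** M) = X ** M"
    using X by (auto simp: penrose_def)
  have y1: "M ** Y ** M = M" "Y ** M ** Y = Y" "conjT cj (M ** Y) = M ** Y" "conjT cj (Y ** M) = Y ** M"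
    using Y by (auto simp: penrose_def)
  have cM1: "conjT cj M = conjT cj M ** (M ** Y)"
    using arg_cong[OF y1(1), of "conjT cj"] y1(3) by (simp add: H)
  have cM2: "conjT cj M = (X ** M) ** conjT cj M"
    using arg_cong[OF x1(1), of "conjT cj"] x1(4) by (simp add: H matrix_mul_assoc)
  have "X = X ** conjT cj (M ** X)"
    using x1 by (simp add: matrix_mul_assoc)
  also have "\<dots> = X ** conjT cj X ** (conjT cj M ** (M ** Y))"
    using cM1 by (simp add: H matrix_mul_assoc)
  also have "\<dots> = X ** conjT cj (M ** X) ** M ** Y"
    by (simp add: H matrix_mul_assoc)
  also have "\<dots> = X ** M ** Y"
    using x1 by (simp add: matrix_mul_assoc)
  finally have XY: "X = X ** M ** Y" .
  have "Y = conjT cj (Y ** M) ** Y"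
    using y1 by simp
  also have "\<dots> = (X ** M) ** conjT cj M ** conjT cj Y ** Y"
    using cM2 by (simp add: H)
  also have "\<dots> = X ** M ** conjT cj (Y ** M) ** Y"
    by (simp add: H matrix_mul_assoc)
  also have "\<dots> = X ** M ** Y"
    using y1 by (metis matrix_mul_assoc)
  finally show ?thesis
    using XY by simp
qed

lemma pinv_eqI: "penrose M X \<Longrightarrow> pinv cj M = X"
  unfolding pinv_def by (rule the_equality) (auto simp: penrose_def[symmetric] penrose_unique)

text \<open>Adding the projection onto the coordinates where \<open>G\<close> vanishes makes \<open>G\<close>
  invertible; subtracting it from the inverse again gives the Moore--Penrose inverse.\<close>

lemma penrose_regularized_inverse:
  fixes G Q :: "'a^'n^'n"
  assumes GD: "G ** coord_proj (- S) = 0" and DG: "coord_proj (- S) ** G = 0"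
    and Q: "Q ** (G + coord_proj (- S)) = mat 1"
  shows "G ** (Q - coord_proj (- S)) = coord_proj S"
    and "(Q - coord_proj (- S)) ** G = coord_proj S"
    and "penrose G (Q - coord_proj (- S))"
proof -
  define D :: "'a^'n^'n" where "D = coord_proj (- S)"
  define P :: "'a^'n^'n" where "P = coord_proj S"
  define X where "X = Q - D"
  have PD: "P = mat 1 - D"
    using coord_proj_add_compl[of S] by (simp add: P_def D_def eq_diff_eq)
  have DD: "D ** D = D"
    by (simp add: D_def coord_proj_mult)
  have Q': "(G + D) ** Q = mat 1"
    using Q by (simp add: D_def matrix_left_right_inverse)
  have DQ: "D ** Q = D"
  proof -
    have "D ** Q = (D ** (G + D)) ** Q"
      using DG DD by (simp add: D_def matrix_add_ldistrib)
    also have "\<dots> = D"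
      using Q' by (simp add: matrix_mul_assoc[symmetric])
    finally show ?thesis .
  qed
  have QD: "Q ** D = D"
  proof -
    have "Q ** D = Q ** ((G + D) ** D)"
      using GD DD by (simp add: D_def matrix_add_rdistrib)
    also have "\<dots> = D"
      using Q by (simp add: D_def matrix_mul_assoc)
    finally show ?thesis .
  qed
  have GX: "G ** X = P"
    using GD Q' DQ by (simp add: X_def PD D_def matrix_diff_ldistrib matrix_add_rdistrib eq_diff_eq)
  have XG: "X ** G = P"
    using DG Q QD by (simp add: X_def PD D_def matrix_diff_rdistrib matrix_add_ldistrib eq_diff_eq)
  have PG: "P ** G = G"
    using DG by (simp add: PD D_def matrix_diff_rdistrib)
  have PX: "P ** X = X"
    using DQ DD by (simp add: PD X_def matrix_diff_rdistrib matrix_diff_ldistrib)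
  show "G ** (Q - coord_proj (- S)) = coord_proj S" "(Q - coord_proj (- S)) ** G = coord_proj S"
    using GX XG by (simp_all add: X_def D_def P_def)
  show "penrose G (Q - coord_proj (- S))"
    using GX XG PG PX by (simp add: penrose_def X_def[symmetric] D_def[symmetric] P_def
        matrix_mul_assoc)
qed

lemma restricted_gram_eq:
  "conjT cj (restrict_cols A S) ** restrict_cols A S
    = coord_proj S ** conjT cj A ** A ** coord_proj S"
  by (simp add: restrict_cols_eq conjT_matrix_mult matrix_mul_assoc)

lemma restricted_gram_mult_compl:
  fixes A :: "'a^'n^'m" and S :: "'n set"
  defines "G \<equiv> conjT cj (restrict_cols A S) ** restrict_cols A S"
  shows "G ** coord_proj (- S) = 0" and "coord_proj (- S) ** G = 0"
  by (simp_all add: G_def restricted_gram_eq matrix_mul_assoc[symmetric] coord_proj_mult)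
    (simp add: matrix_mul_assoc coord_proj_mult)

lemma restricted_gram_regularized_invertible:
  fixes A :: "'a^'n^'m"
  assumes inj: "indep_cols A S"
  shows "\<exists>Q. Q ** (conjT cj (restrict_cols A S) ** restrict_cols A S + coord_proj (- S)) = mat 1"
  unfolding matrix_left_invertible_ker
proof (intro allI impI)
  define G where "G = conjT cj (restrict_cols A S) ** restrict_cols A S"
  define P :: "'a^'n^'n" where "P = coord_proj S"
  define D :: "'a^'n^'n" where "D = coord_proj (- S)"
  fix v
  assume v: "(conjT cj (restrict_cols A S) ** restrict_cols A S + coord_proj (- S)) *v v = 0"
  have "D *v v = D *v ((G + D) *v v)"
    using restricted_gram_mult_compl(2)[where A=A and S=S]
    by (simp add: G_def D_def matrix_vector_mul_assoc matrix_add_ldistrib coord_proj_mult)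
  then have Dv: "D *v v = 0"
    using v by (simp add: G_def D_def)
  then have "G *v v = 0"
    using v by (simp add: G_def D_def matrix_vector_mult_add_rdistrib)
  then have "hinner v (conjT cj (A ** P) *v ((A ** P) *v v)) = 0"
    by (simp add: G_def P_def restrict_cols_eq matrix_vector_mul_assoc)
  then have "(A ** P) *v v = 0"
    by (simp add: hinner_conjT_right hinner_self)
  then have "A *v (P *v v) = 0"
    by (simp add: matrix_vector_mul_assoc)
  moreover have "supp (P *v v) \<subseteq> S"
    by (auto simp: P_def coord_proj_mult_vec supp_def)
  ultimately have "P *v v = 0"
    using inj by (simp add: indep_cols_def)
  with Dv have "(P + D) *v v = 0"
    by (simp add: matrix_vector_mult_add_rdistrib)
  then show "v = 0"
    by (simp add: P_def D_def coord_proj_add_compl)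
qed

lemma pinv_restricted_gram:
  fixes A :: "'a^'n^'m"
  assumes inj: "indep_cols A S"
  defines "G \<equiv> conjT cj (restrict_cols A S) ** restrict_cols A S"
  shows "G ** pinv cj G = coord_proj S" and "pinv cj G ** G = coord_proj S"
    and "pinv cj G ** G ** pinv cj G = pinv cj G"
proof -
  obtain Q where Q: "Q ** (G + coord_proj (- S)) = mat 1"
    using restricted_gram_regularized_invertible[OF inj] by (auto simp: G_def)
  note regularized = penrose_regularized_inverse[OF restricted_gram_mult_compl[where A=A and S=S,
        folded G_def] Q]
  have "pinv cj G = Q - coord_proj (- S)"
    by (rule pinv_eqI) (rule regularized(3))
  then show "G ** pinv cj G = coord_proj S" "pinv cj G ** G = coord_proj S"
      "pinv cj G ** G ** pinv cj G = pinv cj G"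
    using regularized by (simp_all add: penrose_def)
qed

lemma oracle_sol_supp:
  fixes A :: "'a^'n^'m"
  assumes "indep_cols A S"
  shows "supp (oracle_sol cj A S b) \<subseteq> S"
proof -
  define AS where "AS = restrict_cols A S"
  define X where "X = pinv cj (conjT cj AS ** AS)"
  note gram = pinv_restricted_gram[OF assms, folded AS_def, folded X_def]
  have "coord_proj S *v oracle_sol cj A S b = (coord_proj S ** X) *v (conjT cj AS *v b)"
    by (simp add: oracle_sol_def Let_def AS_def[symmetric] X_def[symmetric]
        matrix_vector_mul_assoc matrix_mul_assoc)
  also have "\<dots> = oracle_sol cj A S b"
    using gram(2,3) by (simp add: oracle_sol_def Let_def AS_def[symmetric] X_def[symmetric])
  finally show ?thesis
    by (simp add: coord_proj_mult_vec_eq_iff)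
qed

lemma oracle_sol_normal_equation:
  fixes A :: "'a^'n^'m"
  assumes inj: "indep_cols A S"
  shows "conjT cj (restrict_cols A S) *v (A *v oracle_sol cj A S b - b) = 0"
proof -
  define AS where "AS = restrict_cols A S"
  define X where "X = pinv cj (conjT cj AS ** AS)"
  define x' where "x' = oracle_sol cj A S b"
  note gram = pinv_restricted_gram[OF inj, folded AS_def, folded X_def]
  have "AS *v x' = A *v x'"
    using oracle_sol_supp[OF inj, of b]
    by (simp add: AS_def x'_def restrict_cols_eq matrix_vector_mul_assoc[symmetric]
        coord_proj_mult_vec_eq_iff[symmetric])
  moreover have "conjT cj AS *v (AS *v x') = (conjT cj AS ** AS ** X) *v (conjT cj AS *v b)"
    by (simp add: x'_def oracle_sol_def Let_def AS_def[symmetric] X_def[symmetric]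
        matrix_vector_mul_assoc matrix_mul_assoc)
  moreover have "coord_proj S ** conjT cj AS = conjT cj AS"
    by (simp add: AS_def restrict_cols_eq conjT_matrix_mult matrix_mul_assoc coord_proj_mult)
  ultimately show ?thesis
    by (simp add: x'_def[symmetric] AS_def[symmetric] matrix_vector_mult_diff_distrib
        matrix_vector_mul_assoc gram(1))
qed

lemma oracle_sol_residual_orthogonal:
  fixes A :: "'a^'n^'m"
  assumes "indep_cols A S" and "supp d \<subseteq> S"
  shows "hinner (A *v d) (A *v oracle_sol cj A S b - b) = 0"
proof -
  have "A *v d = restrict_cols A S *v d"
    using assms(2) by (simp add: restrict_cols_eq matrix_vector_mul_assoc[symmetric]
        coord_proj_mult_vec_eq_iff[symmetric])
  then have "hinner (A *v d) (A *v oracle_sol cj A S b - b)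
      = hinner d (conjT cj (restrict_cols A S) *v (A *v oracle_sol cj A S b - b))"
    by (simp add: hinner_conjT_right)
  then show ?thesis
    by (simp add: oracle_sol_normal_equation[OF assms(1)] hinner_def)
qed

lemma oracle_sol_error_split:
  fixes A :: "'a^'n^'m" and x0 :: "'a^'n" and eps :: "'a^'m"
  assumes inj: "indep_cols A S" and "supp x0 \<subseteq> S"
  defines "b \<equiv> A *v x0 + eps"
  defines "x' \<equiv> oracle_sol cj A S b"
  shows "(norm eps)^2 = (norm (A *v (x' - x0)))^2 + (norm (A *v x' - b))^2"
proof -
  have "supp (x' - x0) \<subseteq> S"
    using supp_diff_subset[of x' x0] oracle_sol_supp[OF inj, of b] assms(2) by (auto simp: x'_def)
  then have orth: "hinner (A *v (x' - x0)) (- (A *v x' - b)) = 0"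
    unfolding hinner_uminus_right x'_def using oracle_sol_residual_orthogonal[OF inj] by simp
  have "(norm (A *v (x' - x0) + - (A *v x' - b)))^2
      = (norm (A *v (x' - x0)))^2 + (norm (A *v x' - b))^2"
    using norm_add_sq_orthogonal[OF orth] by (simp only: norm_minus_cancel)
  moreover have "A *v (x' - x0) + - (A *v x' - b) = eps"
    by (simp add: b_def matrix_vector_mult_diff_distrib)
  ultimately show ?thesis
    by simp
qed

lemma oracle_sol_error_bounds:
  fixes A :: "'a^'n^'m" and x0 :: "'a^'n" and eps :: "'a^'m"
  assumes beta_pos: "beta A (card S) > 0" and "supp x0 \<subseteq> S"
  defines "b \<equiv> A *v x0 + eps"
  defines "x' \<equiv> oracle_sol cj A S b"
  shows "norm (A *v x' - b) \<le> norm eps" and "norm (x' - x0) \<le> norm eps / beta A (card S)"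
proof -
  have inj: "indep_cols A S"
    using beta_pos by (rule indep_cols_if_beta_pos)
  have split: "(norm eps)^2 = (norm (A *v (x' - x0)))^2 + (norm (A *v x' - b))^2"
    unfolding b_def x'_def using inj assms(2) by (rule oracle_sol_error_split)
  then have "(norm (A *v x' - b))^2 \<le> (norm eps)^2" "(norm (A *v (x' - x0)))^2 \<le> (norm eps)^2"
    using zero_le_power2[of "norm (A *v x' - b)"] zero_le_power2[of "norm (A *v (x' - x0))"]
    by linarith+
  then have "norm (A *v x' - b) \<le> norm eps" and Ad: "norm (A *v (x' - x0)) \<le> norm eps"
    by (meson norm_ge_zero power2_le_imp_le)+
  then show "norm (A *v x' - b) \<le> norm eps"
    by simp
  have "supp (x' - x0) \<subseteq> S"
    using supp_diff_subset[of x' x0] oracle_sol_supp[OF inj, of b] assms(2) by (auto simp: x'_def)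
  then have "card_nz (x' - x0) \<le> card S"
    by (simp add: card_nz_def card_mono)
  then have "beta A (card S) * norm (x' - x0) \<le> norm eps"
    using beta_mult_norm_le[of "x' - x0" "card S" A] Ad by simp
  then show "norm (x' - x0) \<le> norm eps / beta A (card S)"
    using beta_pos by (simp add: field_simps)
qed

section \<open>Strict local minimality\<close>

lemma residual_lower_bound:
  fixes A :: "'a^'n^'m" and h :: "'a^'n"
  assumes col: "col_inf_norm_le1 A"
    and orth: "\<And>d. supp d \<subseteq> S \<Longrightarrow> hinner (A *v d) (A *v x - b) = 0"
  defines "u \<equiv> A *v (coord_proj S *v h)" and "T \<equiv> \<Sum>j\<in>- S. norm (h $ j)"
  shows "(norm (A *v x - b))^2 + (norm u)^2 - 2 * (norm (A *v x - b) + norm u) * T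
    \<le> (norm (A *v (x + h) - b))^2"
proof -
  define r where "r = A *v x - b"
  define v where "v = A *v (coord_proj (- S) *v h)"
  have "hinner u r = 0"
    unfolding u_def r_def by (rule orth) (auto simp: coord_proj_mult_vec supp_def)
  then have "hinner r u = 0"
    using hinner_commute[of r u] by simp
  then have pythagoras: "(norm (r + u))^2 = (norm r)^2 + (norm u)^2"
    by (rule norm_add_sq_orthogonal)
  have "norm v \<le> (\<Sum>j\<in>UNIV. norm ((coord_proj (- S) *v h) $ j))"
    unfolding v_def using col by (rule norm_matrix_vector_le_sum)
  also have "\<dots> = T"
    by (simp add: T_def coord_proj_mult_vec if_distrib[of norm] sum.If_cases Compl_eq)
  finally have cross_term: "2 * norm (r + u) * norm v \<le> 2 * (norm r + norm u) * T"
    by (intro mult_mono mult_left_mono norm_triangle_ineq) (auto simp: T_def sum_nonneg)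
  have "h = coord_proj S *v h + coord_proj (- S) *v h"
    by (simp add: matrix_vector_mult_add_rdistrib[symmetric] coord_proj_add_compl)
  then have "A *v h = u + v"
    unfolding u_def v_def by (metis matrix_vector_right_distrib)
  then have decomposition: "A *v (x + h) - b = (r + u) + v"
    by (simp add: r_def matrix_vector_right_distrib add_ac diff_add_eq)
  show ?thesis
    unfolding r_def[symmetric] decomposition using norm_add_sq_ge[of "r + u" v] pythagoras cross_term
    by linarith
qed

lemma KKreg_increase_near:
  fixes A :: "'a^'n^'m" and x h :: "'a^'n"
  assumes col: "col_inf_norm_le1 A" and "S \<noteq> {}" and supp: "supp x \<subseteq> S"
    and orth: "\<And>d. supp d \<subseteq> S \<Longrightarrow> hinner (A *v d) (A *v x - b) = 0"
    and head: "\<And>j. j \<in> S \<Longrightarrow> m \<le> norm (x $ j)"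
    and small: "\<And>j. norm (h $ j) \<le> \<delta>"
    and gap: "(3 * real CARD('n) + 3) * \<delta> = m - norm (A *v x - b)"
  defines "T \<equiv> \<Sum>j\<in>- S. norm (h $ j)" and "u \<equiv> A *v (coord_proj S *v h)"
  shows "KKreg (card S) A b x + T * (m - norm (A *v x - b)) + (norm u)^2
    \<le> KKreg (card S) A b (x + h)"
proof -
  define r where "r = norm (A *v x - b)"
  define N where "N = real CARD('n)"
  have "0 \<le> \<delta>"
    using norm_ge_zero small order_trans by blast
  moreover have "0 \<le> N * \<delta>" "0 \<le> r"
    using \<open>0 \<le> \<delta>\<close> by (simp_all add: N_def r_def)
  moreover have "(3 * N + 3) * \<delta> = 3 * (N * \<delta>) + 3 * \<delta>"
    by (simp add: algebra_simps)
  ultimately have "2 * \<delta> \<le> m"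
    using gap unfolding N_def r_def by linarith
  then have Q2_near: "T * (2 * (m - \<delta>) - T - \<delta>) \<le> Q2 (card S) (x + h)"
    using Q2_lower_bound_near_sparse[OF \<open>S \<noteq> {}\<close> supp head small] by (simp add: T_def)
  have T: "0 \<le> T" "T \<le> N * \<delta>"
  proof -
    show "0 \<le> T"
      by (simp add: T_def sum_nonneg)
    have "T \<le> real (card (- S)) * \<delta>"
      unfolding T_def using small by (intro sum_bounded_above)
    also have "\<dots> \<le> N * \<delta>"
      using \<open>0 \<le> \<delta>\<close> by (simp add: N_def card_mono mult_right_mono)
    finally show "T \<le> N * \<delta>" .
  qed
  have "norm u \<le> (\<Sum>j\<in>UNIV. norm ((coord_proj S *v h) $ j))"
    unfolding u_def using col by (rule norm_matrix_vector_le_sum)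
  also have "\<dots> \<le> N * \<delta>"
    using sum_bounded_above[of UNIV "\<lambda>j. norm ((coord_proj S *v h) $ j)" \<delta>] small \<open>0 \<le> \<delta>\<close>
    by (simp add: N_def coord_proj_mult_vec)
  finally have "2 * (r + norm u) * T \<le> 2 * (r + N * \<delta>) * T"
    using T by (intro mult_right_mono) auto
  moreover have "T * (2 * (m - \<delta>) - N * \<delta> - \<delta>) \<le> T * (2 * (m - \<delta>) - T - \<delta>)"
    using T by (intro mult_left_mono) auto
  moreover have "T * (2 * (m - \<delta>) - N * \<delta> - \<delta>) - 2 * (r + N * \<delta>) * T
      = T * (2 * (m - r) - (3 * N + 3) * \<delta>)"
    by (simp add: algebra_simps)
  moreover have "T * (2 * (m - r) - (3 * N + 3) * \<delta>) = T * (m - r)"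
    unfolding N_def r_def gap by simp
  moreover have "r^2 + (norm u)^2 - 2 * (r + norm u) * T \<le> (norm (A *v (x + h) - b))^2"
    using residual_lower_bound[OF col orth, where h=h] by (simp add: r_def u_def T_def)
  moreover have "Q2 (card S) x \<le> 0"
    using supp \<open>S \<noteq> {}\<close> by (rule Q2_nonpos_if_supp_subset)
  ultimately show ?thesis
    using Q2_near unfolding KKreg_def r_def[symmetric] by linarith
qed

lemma strict_local_min_KKreg:
  fixes A :: "'a^'n^'m" and x :: "'a^'n"
  assumes col: "col_inf_norm_le1 A" and inj: "indep_cols A S" and "S \<noteq> {}"
    and supp: "supp x \<subseteq> S"
    and orth: "\<And>d. supp d \<subseteq> S \<Longrightarrow> hinner (A *v d) (A *v x - b) = 0"
    and large: "\<And>j. j \<in> S \<Longrightarrow> norm (A *v x - b) < norm (x $ j)"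
  shows "strict_local_min (KKreg (card S) A b) x"
proof -
  define r where "r = norm (A *v x - b)"
  define m where "m = Min ((\<lambda>j. norm (x $ j)) ` S)"
  define \<delta> where "\<delta> = (m - r) / (3 * real CARD('n) + 3)"
  have "m \<in> (\<lambda>j. norm (x $ j)) ` S"
    unfolding m_def using \<open>S \<noteq> {}\<close> by (intro Min_in) auto
  then have "r < m"
    using large by (auto simp: r_def)
  then have "0 < \<delta>" and gap: "(3 * real CARD('n) + 3) * \<delta> = m - r"
    by (simp_all add: \<delta>_def)
  show ?thesis
    unfolding strict_local_min_def
  proof (intro exI[of _ \<delta>] conjI allI impI)
    show "0 < \<delta>"
      by fact
    fix y
    assume y: "y \<noteq> x \<and> dist y x < \<delta>"
    define h where "h = y - x"
    define T where "T = (\<Sum>j\<in>- S. norm (h $ j))"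
    define u where "u = A *v (coord_proj S *v h)"
    have "norm (h $ j) \<le> \<delta>" for j
      using Finite_Cartesian_Product.norm_nth_le[of h j] y by (simp add: h_def dist_norm)
    then have increase: "KKreg (card S) A b x + T * (m - r) + (norm u)^2 \<le> KKreg (card S) A b y"
      using KKreg_increase_near[OF col \<open>S \<noteq> {}\<close> supp orth, of m h \<delta>] gap
      by (simp add: m_def h_def T_def u_def r_def)
    show "KKreg (card S) A b x < KKreg (card S) A b y"
    proof (cases "T = 0")
      case True
      then have "supp h \<subseteq> S"
        by (auto simp: T_def sum_nonneg_eq_0_iff supp_def)
      moreover have "h \<noteq> 0"
        using y by (simp add: h_def)
      ultimately have "0 < (norm u)^2"
        using inj by (auto simp: u_def indep_cols_def coord_proj_mult_vec_eq_iff[symmetric])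
      moreover have "KKreg (card S) A b x + (norm u)^2 \<le> KKreg (card S) A b y"
        using increase True by simp
      ultimately show ?thesis
        by linarith
    next
      case False
      then have "0 < T * (m - r)"
        using \<open>r < m\<close> by (simp add: T_def sum_nonneg order_less_le)
      then show ?thesis
        using increase zero_le_power2[of "norm u"] by linarith
    qed
  qed
qed

theorem oracle_sol_strict_local_min:
  fixes A :: "'a^'n^'m" and x0 :: "'a^'n" and eps :: "'a^'m"
  assumes col: "col_inf_norm_le1 A" and "x0 \<noteq> 0" and beta_pos: "beta A (card (supp x0)) > 0"
    and large: "\<forall>j\<in>supp x0. norm (x0 $ j) > (1 + 1 / beta A (card (supp x0))) * norm eps"
  defines "S \<equiv> supp x0"
  defines "b \<equiv> A *v x0 + eps"
  defines "x' \<equiv> oracle_sol cj A S b"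
  shows "strict_local_min (KKreg (card S) A b) x'" and "supp x' = S"
    and "\<forall>j\<in>S. norm (x' $ j) > norm eps" and "norm (A *v x' - b) \<le> norm eps"
    and "norm (x' - x0) \<le> norm eps / beta A (card S)"
proof -
  have inj: "indep_cols A S"
    using beta_pos by (simp add: S_def indep_cols_if_beta_pos)
  have "S \<noteq> {}"
    using \<open>x0 \<noteq> 0\<close> by (auto simp: S_def supp_def vec_eq_iff)
  have supp_x': "supp x' \<subseteq> S"
    unfolding x'_def using inj by (rule oracle_sol_supp)
  note bounds = oracle_sol_error_bounds[of A S x0 eps, folded S_def b_def x'_def]
  show residual: "norm (A *v x' - b) \<le> norm eps"
    and distance: "norm (x' - x0) \<le> norm eps / beta A (card S)"
    using bounds beta_pos by (simp_all add: S_def)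
  show large_x': "\<forall>j\<in>S. norm (x' $ j) > norm eps"
  proof
    fix j
    assume "j \<in> S"
    have "norm (x0 $ j) \<le> norm (x' $ j) + norm ((x' - x0) $ j)"
      using norm_triangle_ineq4[of "x' $ j" "x' $ j - x0 $ j"] by simp
    moreover have "norm ((x' - x0) $ j) \<le> norm eps / beta A (card S)"
      using Finite_Cartesian_Product.norm_nth_le[of "x' - x0" j] distance by simp
    moreover have "(1 + 1 / beta A (card S)) * norm eps < norm (x0 $ j)"
      using large \<open>j \<in> S\<close> by (simp add: S_def)
    ultimately show "norm (x' $ j) > norm eps"
      by (simp add: algebra_simps)
  qed
  then show "supp x' = S"
    using supp_x' by (force simp: supp_def)
  show "strict_local_min (KKreg (card S) A b) x'"
  proof (rule strict_local_min_KKreg[OF col inj \<open>S \<noteq> {}\<close> supp_x'])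
    show "hinner (A *v d) (A *v x' - b) = 0" if "supp d \<subseteq> S" for d
      unfolding x'_def using inj that by (rule oracle_sol_residual_orthogonal)
    show "norm (A *v x' - b) < norm (x' $ j)" if "j \<in> S" for j
      using residual large_x' that by fastforce
  qed
qed

end

lemma conjugation_real: "conjugation (id :: real \<Rightarrow> real)"
  by unfold_locales (auto simp: power2_eq_square)

lemma conjugation_complex: "conjugation cnj"
proof
  show "cnj x * x = of_real ((norm x)^2)" for x
    by (metis complex_norm_square mult.commute)
qed simp_all

theorem proposition5p6:
  shows "(\<forall>(A::real^'n^'m) (x0::real^'n) (eps::real^'m).
      col_inf_norm_le1 A \<longrightarrow> x0 \<noteq> 0 \<longrightarrow> beta A (card (supp x0)) > 0 \<longrightarrow>
      (\<forall>j\<in>supp x0. norm (x0 $ j) > (1 + 1 / beta A (card (supp x0))) * norm eps) \<longrightarrow>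
      (let S = supp x0; K = card S; b = A *v x0 + eps; x' = oracle_sol id A S b in
        strict_local_min (KKreg K A b) x' \<and> supp x' = supp x0 \<and>
        (\<forall>j\<in>S. norm (x' $ j) > norm eps) \<and>
        norm (A *v x' - b) \<le> norm eps \<and>
        norm (x' - x0) \<le> norm eps / beta A K)) \<and>
    (\<forall>(A::complex^'n^'m) (x0::complex^'n) (eps::complex^'m).
      col_inf_norm_le1 A \<longrightarrow> x0 \<noteq> 0 \<longrightarrow> beta A (card (supp x0)) > 0 \<longrightarrow>
      (\<forall>j\<in>supp x0. norm (x0 $ j) > (1 + 1 / beta A (card (supp x0))) * norm eps) \<longrightarrow>
      (let S = supp x0; K = card S; b = A *v x0 + eps; x' = oracle_sol cnj A S b in
        strict_local_min (KKreg K A b) x' \<and> supp x' = supp x0 \<and>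
        (\<forall>j\<in>S. norm (x' $ j) > norm eps) \<and>
        norm (A *v x' - b) \<le> norm eps \<and>
        norm (x' - x0) \<le> norm eps / beta A K))"
  unfolding Let_def
  by (intro conjI allI impI;
      rule conjugation.oracle_sol_strict_local_min[OF conjugation_real]
        conjugation.oracle_sol_strict_local_min[OF conjugation_complex];
      assumption)

end
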